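(* Let $A=(a_1\ a_2\ a_3\ a_4)$ be a matrix of positive integers and $A'=(a_1\ a_2\ a_3)$, where the toric ideal of $A'$ is not a complete intersection and there exists $x\in\mathbb N\{a_1,a_2,a_3\}\cap a_4\mathbb N$ with $x\mathbb Z=\mathbb Z\{a_1,a_2,a_3\}\cap a_4\mathbb Z$. Let $M'=\{g_1'=(-c_1,v_{12},v_{13}),\,g_2'=(v_{21},-c_2,v_{23}),\,g_3'=(v_{31},v_{32},-c_3)\}$ be the minimal Markov basis of $A'$ (all $c_i,v_{ij}$ positive integers), and let $M=\{g_1=(g_1',0),g_2=(g_2',0),g_3=(g_3',0),h=(h_1,h_2,h_3,-h_4)\}$ be a minimal Markov basis of $A$ with $h_1,h_2,h_3\ge0$, $h_4>0$. If $M$ reduces the distance of the circuits of $A$, then $M'$ reduces the distance of the circuits of $A'$.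
   Context: For $z\in\mathbb Z^n$, $z^\pm\in\mathbb N^n$ are the unique vectors with disjoint supports and $z=z^+-z^-$; $\|\cdot\|$ is the $1$-norm. The toric ideal of a matrix $C$ is $I_C=\langle x^{u^+}-x^{u^-}:u\in\ker(C)\rangle$; it is a complete intersection if generated by $\dim\ker(C)$ elements. A Markov basis is a set $B\subseteq\ker(C)$ whose binomials generate $I_C$; minimal means no proper subset is one. For nonzero $z\in\ker(C)$, $u\in\ker(C)$ reduces the distance of $z$ if there exist $(p,q)\in\{(z^+,z^-),(z^-,z^+)\}$ and $\varepsilon\in\{\pm1\}$ with $p+\varepsilon u\in\mathbb N^n$ and $\|p+\varepsilon u-q\|<\|z\|$; $B$ reduces the distance of $Z$ if each nonzero $z\in Z$ has its distance reduced by some element of $B$. A circuit of $C$ is a nonzero element of $\ker(C)$ with support of size exactly two. *)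

theory Defs
  imports Main "HOL-Library.Poly_Mapping"
begin

text \<open>Integer vectors of length n are functions nat => int, the coordinates being
  0..n-1 (all other coordinates are required to be 0 where relevant).
  A 1 x n integer matrix is given by its row a :: nat => int.\<close>

definition vec :: "int list \<Rightarrow> nat \<Rightarrow> int" where
  "vec xs i = (if i < length xs then xs ! i else 0)"

definition kerC :: "(nat \<Rightarrow> int) \<Rightarrow> nat \<Rightarrow> (nat \<Rightarrow> int) set" where
  "kerC a n = {u. (\<forall>i. n \<le> i \<longrightarrow> u i = 0) \<and> (\<Sum>i<n. a i * u i) = 0}"

definition pospart :: "(nat \<Rightarrow> int) \<Rightarrow> nat \<Rightarrow> int" where
  "pospart z i = max (z i) 0"
definition negpart :: "(nat \<Rightarrow> int) \<Rightarrow> nat \<Rightarrow> int" where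
  "negpart z i = max (- z i) 0"
definition norm1 :: "nat \<Rightarrow> (nat \<Rightarrow> int) \<Rightarrow> int" where
  "norm1 n z = (\<Sum>i<n. \<bar>z i\<bar>)"
definition in_Nn :: "nat \<Rightarrow> (nat \<Rightarrow> int) \<Rightarrow> bool" where
  "in_Nn n p \<longleftrightarrow> (\<forall>i<n. 0 \<le> p i)"

type_synonym 'k mpoly = "(nat \<Rightarrow>\<^sub>0 nat) \<Rightarrow>\<^sub>0 'k"

definition expo :: "nat \<Rightarrow> (nat \<Rightarrow> int) \<Rightarrow> nat \<Rightarrow>\<^sub>0 nat" where
  "expo n p = (\<Sum>i<n. Poly_Mapping.single i (nat (p i)))"

definition monom :: "nat \<Rightarrow> (nat \<Rightarrow> int) \<Rightarrow> 'k::comm_ring_1 mpoly" where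
  "monom n p = Poly_Mapping.single (expo n p) 1"

definition binom :: "nat \<Rightarrow> (nat \<Rightarrow> int) \<Rightarrow> 'k::comm_ring_1 mpoly" where
  "binom n u = monom n (pospart u) - monom n (negpart u)"

definition ideal_gen :: "'r::comm_ring_1 set \<Rightarrow> 'r set" where
  "ideal_gen S = {(\<Sum>i<k. r i * s i) | (k::nat) r s. \<forall>i<k. s i \<in> S}"

definition toric_ideal :: "(nat \<Rightarrow> int) \<Rightarrow> nat \<Rightarrow> 'k::field mpoly set" where
  "toric_ideal a n = ideal_gen {binom n u | u. u \<in> kerC a n}"

definition ker_dim :: "(nat \<Rightarrow> int) \<Rightarrow> nat \<Rightarrow> nat" where
  "ker_dim a n = n - (if \<forall>i<n. a i = 0 then 0 else 1)"

definition complete_intersection ::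
  "'k::field itself \<Rightarrow> (nat \<Rightarrow> int) \<Rightarrow> nat \<Rightarrow> bool" where
  "complete_intersection (TYPE('k)) a n \<longleftrightarrow>
     (\<exists>gs :: 'k mpoly list. length gs = ker_dim a n \<and> ideal_gen (set gs) = toric_ideal a n)"

definition markov_basis ::
  "'k::field itself \<Rightarrow> (nat \<Rightarrow> int) \<Rightarrow> nat \<Rightarrow> (nat \<Rightarrow> int) set \<Rightarrow> bool" where
  "markov_basis (TYPE('k)) a n B \<longleftrightarrow> B \<subseteq> kerC a n \<and>
     ideal_gen ((binom n :: (nat \<Rightarrow> int) \<Rightarrow> 'k mpoly) ` B) = toric_ideal a n"

definition minimal_markov_basis ::
  "'k::field itself \<Rightarrow> (nat \<Rightarrow> int) \<Rightarrow> nat \<Rightarrow> (nat \<Rightarrow> int) set \<Rightarrow> bool" where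
  "minimal_markov_basis K a n B \<longleftrightarrow> markov_basis K a n B \<and>
     (\<forall>B'. B' \<subset> B \<longrightarrow> \<not> markov_basis K a n B')"

definition reduces_dist :: "nat \<Rightarrow> (nat \<Rightarrow> int) \<Rightarrow> (nat \<Rightarrow> int) \<Rightarrow> bool" where
  "reduces_dist n u z \<longleftrightarrow>
     (\<exists>(p, q) \<in> {(pospart z, negpart z), (negpart z, pospart z)}. \<exists>\<epsilon> \<in> {1, -1::int}.
        in_Nn n (\<lambda>i. p i + \<epsilon> * u i) \<and> norm1 n (\<lambda>i. p i + \<epsilon> * u i - q i) < norm1 n z)"

definition reduces_dist_set :: "nat \<Rightarrow> (nat \<Rightarrow> int) set \<Rightarrow> (nat \<Rightarrow> int) set \<Rightarrow> bool" where
  "reduces_dist_set n B Z \<longleftrightarrow>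
     (\<forall>z \<in> Z. (\<exists>i<n. z i \<noteq> 0) \<longrightarrow> (\<exists>u \<in> B. reduces_dist n u z))"

definition circuits :: "(nat \<Rightarrow> int) \<Rightarrow> nat \<Rightarrow> (nat \<Rightarrow> int) set" where
  "circuits a n = {z \<in> kerC a n. card {i. i < n \<and> z i \<noteq> 0} = 2}"

end

theory Submission
  imports Defs
begin

(* Let z be a circuit of A' with z_i > 0 > z_j; seen as a circuit of A it is reduced by some
   element of M. If that element is some g_t, dropping the last coordinate shows that g_t' reduces z.
   Otherwise h reduces z, which forces h to vanish on the first three coordinates outside a single
   index t of the support of z, and h_4 < h_t. Let s be the other support index. Since M' is a
   Markov basis, x_s^|z_s| is divisible by a monomial of M', necessarily x_s^c_s. The hypothesis
   applied to the circuit a_4 e_s - a_s e_4 of A shows that the coordinate sum of g_s' is negative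
   unless (sum of h_k for k <> s) < h_s + h_4, which is impossible here. Finally, a vector with
   negative coordinate sum whose only negative entry -c_s is dominated by |z_s|, and whose positive
   entries sit where z has the sign opposite to z_s, reduces the distance of z.
   The argument works verbatim for any n >= 3 generators, provided every element of M' is negative
   in exactly one coordinate. *)

lemma lookup_expo: "l < n \<Longrightarrow> Poly_Mapping.lookup (expo n p) l = nat (p l)"
  unfolding expo_def lookup_sum lookup_single by (simp add: when_def)

lemma keys_binom:
  "Poly_Mapping.keys (binom n g :: 'k::comm_ring_1 mpoly) \<subseteq> {expo n (pospart g), expo n (negpart g)}"
  unfolding binom_def monom_def using keys_diff by fastforce

lemma binom_mem_toric_ideal: "u \<in> kerC a n \<Longrightarrow> binom n u \<in> toric_ideal a n"
  unfolding toric_ideal_def ideal_gen_def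
  by (rule CollectI, rule exI[of _ 1], rule exI[of _ "\<lambda>_. 1"], rule exI[of _ "\<lambda>_. binom n u"]) auto

(* The monomial x^p has a nonzero coefficient in binom n z, so it is a monomial of some product
   r * binom n g with g in B, hence a multiple of x^(g+) or x^(g-). *)
lemma binom_in_ideal_gen_divisible:
  fixes B :: "(nat \<Rightarrow> int) set"
  assumes mem: "(binom n z :: 'k::field mpoly) \<in> ideal_gen (binom n ` B)"
    and nz: "i < n" "z i \<noteq> 0"
    and p: "p \<in> {pospart z, negpart z}"
  shows "\<exists>g\<in>B. \<exists>s\<in>{pospart g, negpart g}. \<forall>l<n. s l \<le> p l"
proof -
  have "expo n (pospart z) \<noteq> expo n (negpart z)"
  proof
    assume "expo n (pospart z) = expo n (negpart z)"
    then have "Poly_Mapping.lookup (expo n (pospart z)) i = Poly_Mapping.lookup (expo n (negpart z)) i"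
      by simp
    then show False using nz by (simp add: lookup_expo pospart_def negpart_def)
  qed
  then have "Poly_Mapping.lookup (binom n z :: 'k mpoly) (expo n p) \<noteq> 0"
    using p unfolding binom_def monom_def by (auto simp: lookup_minus lookup_single)
  moreover obtain k :: nat and r s :: "nat \<Rightarrow> 'k mpoly"
    where eq: "(binom n z :: 'k mpoly) = (\<Sum>i<k. r i * s i)" and s: "\<forall>i<k. s i \<in> binom n ` B"
    using mem unfolding ideal_gen_def by (auto simp only: mem_Collect_eq)
  ultimately have "(\<Sum>i<k. Poly_Mapping.lookup (r i * s i) (expo n p)) \<noteq> 0"
    by (simp add: lookup_sum)
  then obtain i where i: "i < k" "Poly_Mapping.lookup (r i * s i) (expo n p) \<noteq> 0"
    by (meson sum.neutral lessThan_iff)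
  then obtain g where g: "g \<in> B" "s i = binom n g" using s by blast
  from i have "expo n p \<in> Poly_Mapping.keys (r i * s i)" by (simp add: in_keys_iff)
  then obtain x y where xy: "expo n p = x + y" "y \<in> Poly_Mapping.keys (s i)"
    using keys_mult[of "r i" "s i"] by auto
  then obtain t where t: "t \<in> {pospart g, negpart g}" "y = expo n t"
    using g(2) keys_binom[of n g, where 'k='k] by auto
  have "t l \<le> p l" if "l < n" for l
  proof -
    have "Poly_Mapping.lookup (expo n p) l = Poly_Mapping.lookup x l + Poly_Mapping.lookup y l"
      using xy by (simp add: lookup_add)
    then have "nat (t l) \<le> nat (p l)" using that t by (simp add: lookup_expo)
    moreover have "0 \<le> t l" "0 \<le> p l" using t p by (auto simp: pospart_def negpart_def)
    ultimately show ?thesis by simp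
  qed
  then show ?thesis using g t by blast
qed

lemma pospart_minus_negpart: "pospart z k - negpart z k = z k"
  by (simp add: pospart_def negpart_def)

lemma reduces_dist_uminus: "reduces_dist n u (\<lambda>k. - z k) \<longleftrightarrow> reduces_dist n u z"
proof -
  have "pospart (\<lambda>k. - z k) = negpart z" "negpart (\<lambda>k. - z k) = pospart z"
    by (simp_all add: fun_eq_iff pospart_def negpart_def)
  moreover have "norm1 n (\<lambda>k. - z k) = norm1 n z" by (simp add: norm1_def)
  ultimately show ?thesis unfolding reduces_dist_def by auto
qed

lemma reduces_dist_if_sum_neg:
  assumes nonneg: "\<forall>k<n. 0 \<le> pospart z k + u k"
    and opposite: "\<forall>k<n. 0 < u k \<longrightarrow> z k \<le> 0"
    and neg: "sum u {..<n} < 0"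
  shows "reduces_dist n u z"
proof -
  have "norm1 n (\<lambda>k. pospart z k + u k - negpart z k) = (\<Sum>k<n. \<bar>z k + u k\<bar>)"
    using pospart_minus_negpart[of z] by (simp add: norm1_def algebra_simps)
  also have "\<dots> \<le> (\<Sum>k<n. \<bar>z k\<bar> + u k)"
    using nonneg opposite by (intro sum_mono) (force simp: pospart_def)
  also have "\<dots> < norm1 n z" using neg by (simp add: sum.distrib norm1_def)
  finally show ?thesis
    using nonneg unfolding reduces_dist_def in_Nn_def by force
qed

lemma reduces_dist_last_negative:
  assumes red: "reduces_dist (Suc n) h z" and "z n = 0" "h n < 0" and h: "\<forall>k<n. 0 \<le> h k"
  shows "\<exists>p\<in>{pospart z, negpart z}. (\<forall>k<n. h k \<le> p k) \<and> 0 < sum h {..<Suc n}"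
proof -
  obtain p q and \<epsilon> :: int where pq: "(p, q) \<in> {(pospart z, negpart z), (negpart z, pospart z)}"
    and "\<epsilon> \<in> {1, -1}" and nn: "in_Nn (Suc n) (\<lambda>k. p k + \<epsilon> * h k)"
    and lt: "norm1 (Suc n) (\<lambda>k. p k + \<epsilon> * h k - q k) < norm1 (Suc n) z"
    using red unfolding reduces_dist_def by blast
  have parts: "0 \<le> p k \<and> 0 \<le> q k \<and> (p k = 0 \<or> q k = 0) \<and> \<bar>p k - q k\<bar> = \<bar>z k\<bar>" for k
    using pq by (auto simp: pospart_def negpart_def)
  have "p n = 0" "q n = 0" using pq \<open>z n = 0\<close> by (auto simp: pospart_def negpart_def)
  then have "\<epsilon> = -1" using nn \<open>h n < 0\<close> \<open>\<epsilon> \<in> {1, -1}\<close> by (auto simp: in_Nn_def)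
  then have le: "\<forall>k<n. h k \<le> p k" using nn by (auto simp: in_Nn_def)
  have "(\<Sum>k<n. \<bar>z k\<bar> - h k) - h n = norm1 (Suc n) (\<lambda>k. p k - h k - q k)"
  proof -
    have "\<bar>p k - h k - q k\<bar> = \<bar>z k\<bar> - h k" if "k < n" for k
    proof -
      have "0 \<le> h k" "h k \<le> p k" using le h that by auto
      then show ?thesis using parts[of k] by (auto simp: abs_if)
    qed
    then show ?thesis using \<open>p n = 0\<close> \<open>q n = 0\<close> \<open>h n < 0\<close> by (simp add: norm1_def)
  qed
  also have "\<dots> < (\<Sum>k<n. \<bar>z k\<bar>)" using lt \<open>\<epsilon> = -1\<close> \<open>z n = 0\<close> by (simp add: norm1_def)
  finally have "0 < sum h {..<Suc n}" by (simp add: sum_subtractf)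
  then show ?thesis using pq le by blast
qed

lemma two_point_reduction_bound:
  fixes v :: "nat \<Rightarrow> int"
  assumes "l < N" "l' < N" "l \<noteq> l'"
    and nn: "in_Nn N (\<lambda>k. (if k = l then x else 0) + v k)"
    and lt: "norm1 N (\<lambda>k. (if k = l then x else 0) + v k - (if k = l' then y else 0)) < x + y"
  shows "(\<forall>k<N. k \<noteq> l \<longrightarrow> 0 \<le> v k) \<and> sum v {..<N} < 2 * v l'"
proof
  show "\<forall>k<N. k \<noteq> l \<longrightarrow> 0 \<le> v k" using nn by (auto simp: in_Nn_def)
  define f where "f k = (if k = l then x else 0) + v k - (if k = l' then y else 0)" for k
  have "sum f {..<N} - 2 * f l' = sum f ({..<N} - {l'}) - f l'"
    using sum.remove[of "{..<N}" l' f] \<open>l' < N\<close> by simp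
  also have "\<dots> \<le> sum (\<lambda>k. \<bar>f k\<bar>) ({..<N} - {l'}) + \<bar>f l'\<bar>"
    using sum_mono[of "{..<N} - {l'}" f "\<lambda>k. \<bar>f k\<bar>"] by fastforce
  also have "\<dots> = norm1 N f"
    using sum.remove[of "{..<N}" l' "\<lambda>k. \<bar>f k\<bar>"] \<open>l' < N\<close> by (simp add: norm1_def)
  finally have "sum f {..<N} - 2 * f l' < x + y" using lt unfolding f_def by simp
  moreover have "sum f {..<N} = x + sum v {..<N} - y"
    using assms(1-3) by (simp add: f_def sum.distrib sum_subtractf)
  ultimately show "sum v {..<N} < 2 * v l'" using assms(1-3) by (simp add: f_def)
qed

lemma reduces_dist_two_support:
  assumes red: "reduces_dist N u w" and "i < N" "m < N" "i \<noteq> m" "0 < \<alpha>" "0 < \<beta>"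
    and w: "w = (\<lambda>k. if k = i then \<alpha> else if k = m then - \<beta> else 0)"
  shows "\<exists>v\<in>{u, \<lambda>k. - u k}. \<exists>(l, l')\<in>{(i, m), (m, i)}.
           (\<forall>k<N. k \<noteq> l \<longrightarrow> 0 \<le> v k) \<and> sum v {..<N} < 2 * v l'"
proof -
  obtain p q and \<epsilon> :: int where pq: "(p, q) \<in> {(pospart w, negpart w), (negpart w, pospart w)}"
    and \<epsilon>: "\<epsilon> \<in> {1, -1}" and nn: "in_Nn N (\<lambda>k. p k + \<epsilon> * u k)"
    and lt: "norm1 N (\<lambda>k. p k + \<epsilon> * u k - q k) < norm1 N w"
    using red unfolding reduces_dist_def by blast
  have parts: "pospart w = (\<lambda>k. if k = i then \<alpha> else 0)" "negpart w = (\<lambda>k. if k = m then \<beta> else 0)"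
    using w \<open>i \<noteq> m\<close> \<open>0 < \<alpha>\<close> \<open>0 < \<beta>\<close> by (auto simp: fun_eq_iff pospart_def negpart_def)
  have "norm1 N w = \<alpha> + \<beta>"
  proof -
    have "\<bar>w k\<bar> = pospart w k + negpart w k" for k by (simp add: pospart_def negpart_def)
    then show ?thesis using \<open>i < N\<close> \<open>m < N\<close> by (simp add: norm1_def sum.distrib parts)
  qed
  define v where "v k = \<epsilon> * u k" for k
  have v: "v \<in> {u, \<lambda>k. - u k}" using \<epsilon> by (auto simp: v_def fun_eq_iff)
  have nn': "in_Nn N (\<lambda>k. p k + v k)" and lt': "norm1 N (\<lambda>k. p k + v k - q k) < \<alpha> + \<beta>"
    using nn lt \<open>norm1 N w = \<alpha> + \<beta>\<close> by (simp_all add: v_def)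
  from pq consider "p = pospart w" "q = negpart w" | "p = negpart w" "q = pospart w" by auto
  then show ?thesis
  proof cases
    case 1
    have "(\<forall>k<N. k \<noteq> i \<longrightarrow> 0 \<le> v k) \<and> sum v {..<N} < 2 * v m"
      by (rule two_point_reduction_bound[where x=\<alpha> and y=\<beta>]) (use nn' lt' assms(2-4) in \<open>simp_all add: 1 parts\<close>)
    then show ?thesis using v by (intro bexI[where x=v]) auto
  next
    case 2
    have "(\<forall>k<N. k \<noteq> m \<longrightarrow> 0 \<le> v k) \<and> sum v {..<N} < 2 * v i"
      by (rule two_point_reduction_bound[where x=\<beta> and y=\<alpha>])
        (use nn' lt' assms(2-4) in \<open>simp_all add: 2 parts add.commute\<close>)
    then show ?thesis using v by (intro bexI[where x=v]) auto
  qed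
qed

lemma reduces_dist_Suc_zero:
  assumes "reduces_dist (Suc n) u z" "u n = 0" "z n = 0"
  shows "reduces_dist n u z"
proof -
  obtain p q and \<epsilon> :: int where pq: "(p, q) \<in> {(pospart z, negpart z), (negpart z, pospart z)}"
    and "\<epsilon> \<in> {1, -1}" and "in_Nn (Suc n) (\<lambda>k. p k + \<epsilon> * u k)"
    and "norm1 (Suc n) (\<lambda>k. p k + \<epsilon> * u k - q k) < norm1 (Suc n) z"
    using assms(1) unfolding reduces_dist_def by blast
  moreover have "p n = 0" "q n = 0" using pq \<open>z n = 0\<close> by (auto simp: pospart_def negpart_def)
  ultimately have "in_Nn n (\<lambda>k. p k + \<epsilon> * u k)"
    and "norm1 n (\<lambda>k. p k + \<epsilon> * u k - q k) < norm1 n z"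
    using assms(2,3) by (simp_all add: in_Nn_def norm1_def)
  then show ?thesis using pq \<open>\<epsilon> \<in> {1, -1}\<close> unfolding reduces_dist_def by blast
qed

lemma circuit_opposite_signs:
  assumes "z \<in> circuits a n" "\<forall>k<n. 0 < a k"
  obtains i j where "i < n" "j < n" "0 < z i" "z j < 0" "\<forall>k. k \<noteq> i \<longrightarrow> k \<noteq> j \<longrightarrow> z k = 0"
proof -
  from assms(1) have zero: "\<forall>k\<ge>n. z k = 0" and ker: "(\<Sum>k<n. a k * z k) = 0"
    and "card {k. k < n \<and> z k \<noteq> 0} = 2" by (auto simp: circuits_def kerC_def)
  then obtain i j where "i \<noteq> j" and supp: "{k. k < n \<and> z k \<noteq> 0} = {i, j}"
    by (auto simp: card_2_iff)
  then have ij: "i < n" "j < n" "z i \<noteq> 0" "z j \<noteq> 0" by blast+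
  have outside: "\<forall>k. k \<noteq> i \<longrightarrow> k \<noteq> j \<longrightarrow> z k = 0"
  proof (intro allI impI)
    fix k assume "k \<noteq> i" "k \<noteq> j"
    then have "k \<notin> {k. k < n \<and> z k \<noteq> 0}" using supp by blast
    then show "z k = 0" using zero by (auto simp: not_less)
  qed
  have "(\<Sum>k<n. a k * z k) = (\<Sum>k\<in>{i, j}. a k * z k)"
    using ij outside by (intro sum.mono_neutral_right) auto
  then have "a i * z i = - (a j * z j)" using ker \<open>i \<noteq> j\<close> by simp
  moreover have "sgn (a i * z i) = sgn (z i)" "sgn (a j * z j) = sgn (z j)"
    using assms(2) ij by (simp_all add: sgn_mult)
  ultimately have "sgn (z i) = - sgn (z j)" by (metis sgn_minus)
  then have "0 < z i \<and> z j < 0 \<or> 0 < z j \<and> z i < 0"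
    using ij by (auto simp: sgn_if split: if_splits)
  then show thesis using that ij outside by blast
qed

lemma circuit_part_single_support:
  assumes z: "0 < z i" "z j < 0" "\<forall>k. k \<noteq> i \<longrightarrow> k \<noteq> j \<longrightarrow> z k = 0"
    and p: "p \<in> {pospart z, negpart z}"
  obtains t s where "{t, s} = {i, j}" "t \<noteq> s" "\<forall>k. k \<noteq> t \<longrightarrow> p k = 0"
proof -
  have nonpos: "\<forall>k. k \<noteq> i \<longrightarrow> z k \<le> 0" using z(2,3) by (metis order.order_iff_strict)
  have nonneg: "\<forall>k. k \<noteq> j \<longrightarrow> 0 \<le> z k" using z(1,3) by (metis order.order_iff_strict)
  have "i \<noteq> j" using z(1,2) by auto
  show thesis
  proof (cases "p = pospart z")
    case True
    then have "\<forall>k. k \<noteq> i \<longrightarrow> p k = 0" using nonpos by (simp add: pospart_def)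
    then show thesis using that[of i j] \<open>i \<noteq> j\<close> by blast
  next
    case False
    then have "\<forall>k. k \<noteq> j \<longrightarrow> p k = 0" using p nonneg by (simp add: negpart_def)
    then show thesis using that[of j i] \<open>i \<noteq> j\<close> by blast
  qed
qed

lemma circuit_Suc: "z \<in> circuits a n \<Longrightarrow> z \<in> circuits a (Suc n)"
proof -
  assume z: "z \<in> circuits a n"
  then have "z n = 0" by (simp add: circuits_def kerC_def)
  then have "{k. k < Suc n \<and> z k \<noteq> 0} = {k. k < n \<and> z k \<noteq> 0}" by (auto simp: less_Suc_eq)
  with z \<open>z n = 0\<close> show ?thesis by (simp add: circuits_def kerC_def)
qed

lemma binomial_circuit:
  assumes "s < n" "a s \<noteq> 0" "a n \<noteq> 0"
  shows "(\<lambda>k. if k = s then a n else if k = n then - a s else 0) \<in> circuits a (Suc n)"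
proof -
  let ?w = "\<lambda>k. if k = s then a n else if k = n then - a s else 0"
  have "{k. k < Suc n \<and> ?w k \<noteq> 0} = {s, n}" using assms by auto
  moreover have "(\<Sum>k<Suc n. a k * ?w k) = 0"
  proof -
    have "(\<Sum>k<n. a k * ?w k) = (\<Sum>k<n. if k = s then a s * a n else 0)" by (rule sum.cong) auto
    then show ?thesis using assms(1) by simp
  qed
  ultimately show ?thesis using assms(1) by (simp add: circuits_def kerC_def)
qed

(* The shape of the elements of M': for instance (v21, -c2, v23) is neg_only_at 3 1. *)
definition neg_only_at :: "nat \<Rightarrow> nat \<Rightarrow> (nat \<Rightarrow> int) \<Rightarrow> bool" where
  "neg_only_at n t g \<longleftrightarrow> t < n \<and> g t < 0 \<and> (\<forall>k<n. k \<noteq> t \<longrightarrow> 0 < g k) \<and> (\<forall>k\<ge>n. g k = 0)"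

lemma third_index:
  fixes n s t :: nat
  assumes "2 < n"
  obtains k where "k < n" "k \<noteq> s" "k \<noteq> t"
proof -
  have "\<exists>k<3. k \<noteq> s \<and> k \<noteq> t" by presburger
  then obtain k where "k < 3" "k \<noteq> s" "k \<noteq> t" by blast
  with assms show thesis by (intro that[of k]) auto
qed

lemma two_support_reduced_by_neg_only_at:
  assumes "2 < n" "neg_only_at n t g" "s < n" "0 < \<alpha>" "0 < \<beta>"
    and "reduces_dist (Suc n) g (\<lambda>k. if k = s then \<alpha> else if k = n then - \<beta> else 0)"
  shows "t = s \<and> sum g {..<n} < 0"
proof -
  obtain k0 where k0: "k0 < n" "k0 \<noteq> s" "k0 \<noteq> t" using third_index \<open>2 < n\<close> by blast
  have g: "t < n" "g t < 0" "\<forall>k<n. k \<noteq> t \<longrightarrow> 0 < g k" "g n = 0"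
    using assms(2) by (simp_all add: neg_only_at_def)
  have "s < Suc n" "n < Suc n" "s \<noteq> n" using assms(3) by auto
  from reduces_dist_two_support[OF assms(6) this assms(4,5) refl]
  obtain v l l' where v: "v \<in> {g, \<lambda>k. - g k}" and ll': "(l, l') \<in> {(s, n), (n, s)}"
    and nonneg: "\<forall>k<Suc n. k \<noteq> l \<longrightarrow> 0 \<le> v k" and lt: "sum v {..<Suc n} < 2 * v l'"
    by blast
  have v_nonneg: "0 \<le> v k" if "k < n" "k \<noteq> s" for k
    using nonneg ll' that by (metis empty_iff insert_iff less_Suc_eq nat_neq_iff prod.inject)
  have "v = g"
  proof (rule ccontr)
    assume "v \<noteq> g"
    then have "v k0 = - g k0" using v by auto
    then show False using v_nonneg[of k0] g(3) k0 by fastforce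
  qed
  have "t = s" using v_nonneg[of t] g(1,2) \<open>v = g\<close> by fastforce
  have "l = s"
  proof (rule ccontr)
    assume "l \<noteq> s"
    then show False using nonneg[rule_format, of s] g(2) assms(3) \<open>v = g\<close> \<open>t = s\<close> by simp
  qed
  then have "sum g {..<Suc n} < 0" using lt ll' g(4) \<open>v = g\<close> by auto
  then show ?thesis using g(4) \<open>t = s\<close> by simp
qed

lemma two_support_reduced_by_last_negative:
  assumes "h n < 0" "\<forall>k<n. 0 \<le> h k" "s < n" "0 < \<alpha>" "0 < \<beta>"
    and "reduces_dist (Suc n) h (\<lambda>k. if k = s then \<alpha> else if k = n then - \<beta> else 0)"
  shows "sum h {..<Suc n} < 2 * h s"
proof -
  have "s < Suc n" "n < Suc n" "s \<noteq> n" using assms(3) by auto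
  from reduces_dist_two_support[OF assms(6) this assms(4,5) refl]
  obtain v l l' where v: "v \<in> {h, \<lambda>k. - h k}" and ll': "(l, l') \<in> {(s, n), (n, s)}"
    and nonneg: "\<forall>k<Suc n. k \<noteq> l \<longrightarrow> 0 \<le> v k" and lt: "sum v {..<Suc n} < 2 * v l'"
    by blast
  show ?thesis
  proof (cases "v = h")
    case True
    then have "l = n" using nonneg ll' \<open>h n < 0\<close> by fastforce
    then show ?thesis using lt ll' True \<open>s < n\<close> by auto
  next
    case False
    then have "v = (\<lambda>k. - h k)" using v by blast
    have zero: "\<forall>k<n. k \<noteq> l \<longrightarrow> h k = 0"
    proof (intro allI impI)
      fix k assume "k < n" "k \<noteq> l"
      then have "0 \<le> - h k" using nonneg \<open>v = (\<lambda>k. - h k)\<close> by auto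
      then show "h k = 0" using assms(2) \<open>k < n\<close> by force
    qed
    have "l = s"
    proof (rule ccontr)
      assume "l \<noteq> s"
      then have "l = n" "l' = s" using ll' by auto
      then show False using lt zero \<open>v = (\<lambda>k. - h k)\<close> \<open>h n < 0\<close> \<open>s < n\<close> by (simp add: sum_negf)
    qed
    have "sum h {..<n} = h s"
    proof -
      have "sum h {..<n} = (\<Sum>k<n. if k = s then h s else 0)"
        using zero \<open>l = s\<close> by (intro sum.cong) auto
      then show ?thesis using \<open>s < n\<close> by simp
    qed
    then show ?thesis using assms(1) assms(2)[rule_format, OF assms(3)] by simp
  qed
qed

lemma neg_only_at_divides_single_support:
  fixes G :: "nat \<Rightarrow> nat \<Rightarrow> int"
  assumes "2 < n" and G: "\<forall>t<n. neg_only_at n t (G t)"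
    and div: "(binom n z :: 'k::field mpoly) \<in> ideal_gen (binom n ` G ` {..<n})"
    and p: "p \<in> {pospart z, negpart z}" and "s < n" "0 < p s" and single: "\<forall>k<n. k \<noteq> s \<longrightarrow> p k = 0"
  shows "\<forall>k<n. 0 \<le> p k + G s k"
proof -
  have p_nonneg: "0 \<le> p k" for k using p by (auto simp: pospart_def negpart_def)
  have "z s \<noteq> 0" using p \<open>0 < p s\<close> by (auto simp: pospart_def negpart_def)
  then obtain t \<sigma> where "t < n" and \<sigma>: "\<sigma> \<in> {pospart (G t), negpart (G t)}" and le: "\<forall>k<n. \<sigma> k \<le> p k"
    using binom_in_ideal_gen_divisible[OF div \<open>s < n\<close> _ p] by blast
  obtain k0 where k0: "k0 < n" "k0 \<noteq> s" "k0 \<noteq> t" using third_index \<open>2 < n\<close> by blast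
  have Gt: "G t t < 0" "\<forall>k<n. k \<noteq> t \<longrightarrow> 0 < G t k" using G \<open>t < n\<close> by (auto simp: neg_only_at_def)
  have "\<sigma> \<noteq> pospart (G t)"
  proof
    assume "\<sigma> = pospart (G t)"
    then have "0 < \<sigma> k0" using Gt k0 by (simp add: pospart_def)
    then show False using le single k0 by force
  qed
  then have "\<sigma> = negpart (G t)" using \<sigma> by blast
  then have "0 < \<sigma> t" using Gt by (simp add: negpart_def)
  then have "t = s" using le single \<open>t < n\<close> by force
  show ?thesis
  proof (intro allI impI)
    fix k assume "k < n"
    show "0 \<le> p k + G s k"
    proof (cases "k = s")
      case True
      then show ?thesis using le \<open>k < n\<close> \<open>\<sigma> = negpart (G t)\<close> \<open>t = s\<close> by (force simp: negpart_def)
    next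
      case False
      then show ?thesis using Gt \<open>k < n\<close> \<open>t = s\<close> p_nonneg[of k] by force
    qed
  qed
qed

lemma neg_only_at_reduces_circuit:
  fixes G :: "nat \<Rightarrow> nat \<Rightarrow> int"
  assumes "2 < n" and G: "\<forall>t<n. neg_only_at n t (G t)"
    and div: "(binom n z :: 'k::field mpoly) \<in> ideal_gen (binom n ` G ` {..<n})"
    and z: "0 < z i" "z j < 0" "\<forall>k. k \<noteq> i \<longrightarrow> k \<noteq> j \<longrightarrow> z k = 0"
    and "s \<in> {i, j}" "s < n" and "sum (G s) {..<n} < 0"
  shows "reduces_dist n (G s) z"
proof -
  obtain \<zeta> where \<zeta>: "\<zeta> \<in> {z, \<lambda>k. - z k}" "0 < \<zeta> s" "\<forall>k. k \<noteq> s \<longrightarrow> \<zeta> k \<le> 0"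
  proof (cases "s = i")
    case True
    then show thesis using that[of z] z by force
  next
    case False
    then have "s = j" using \<open>s \<in> {i, j}\<close> by simp
    have "\<forall>k. k \<noteq> s \<longrightarrow> 0 \<le> z k" using z \<open>s = j\<close> by (metis order.order_iff_strict)
    then show thesis using that[of "\<lambda>k. - z k"] z(2) \<open>s = j\<close> by simp
  qed
  have "pospart \<zeta> \<in> {pospart z, negpart z}"
    using \<zeta>(1) by (auto simp: fun_eq_iff pospart_def negpart_def)
  moreover have "\<forall>k<n. k \<noteq> s \<longrightarrow> pospart \<zeta> k = 0" "0 < pospart \<zeta> s"
    using \<zeta>(2,3) by (simp_all add: pospart_def)
  ultimately have "\<forall>k<n. 0 \<le> pospart \<zeta> k + G s k"
    using neg_only_at_divides_single_support[OF \<open>2 < n\<close> G div] \<open>s < n\<close> by blast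
  moreover have "\<forall>k<n. 0 < G s k \<longrightarrow> \<zeta> k \<le> 0"
    using G \<zeta>(3) \<open>s < n\<close> by (metis neg_only_at_def order.asym)
  ultimately have "reduces_dist n (G s) \<zeta>"
    using reduces_dist_if_sum_neg \<open>sum (G s) {..<n} < 0\<close> by blast
  then show ?thesis using \<zeta>(1) reduces_dist_uminus by auto
qed

lemma binomial_circuit_reduction_alternative:
  fixes G :: "nat \<Rightarrow> nat \<Rightarrow> int"
  assumes "2 < n" and a: "\<forall>k\<le>n. 0 < a k" and G: "\<forall>t<n. neg_only_at n t (G t)"
    and h: "h n < 0" "\<forall>k<n. 0 \<le> h k"
    and red: "reduces_dist_set (Suc n) (insert h (G ` {..<n})) (circuits a (Suc n))"
    and "s < n"
  shows "sum (G s) {..<n} < 0 \<or> sum h {..<Suc n} < 2 * h s"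
proof -
  let ?w = "\<lambda>k. if k = s then a n else if k = n then - a s else 0"
  have "0 < a s" "0 < a n" using a \<open>s < n\<close> by auto
  then have "?w \<in> circuits a (Suc n)" using binomial_circuit \<open>s < n\<close> by simp
  moreover have "\<exists>k<Suc n. ?w k \<noteq> 0" using \<open>0 < a s\<close> \<open>s < n\<close> by (intro exI[of _ n]) simp
  ultimately have "\<exists>u\<in>insert h (G ` {..<n}). reduces_dist (Suc n) u ?w"
    by (rule red[unfolded reduces_dist_set_def, rule_format])
  then obtain u where "u \<in> insert h (G ` {..<n})" and red_w: "reduces_dist (Suc n) u ?w" by blast
  then consider t where "t < n" "u = G t" | "u = h" by blast
  then show ?thesis
  proof cases
    case 1
    then have "neg_only_at n t (G t)" using G by simp
    from two_support_reduced_by_neg_only_at[OF \<open>2 < n\<close> this \<open>s < n\<close> \<open>0 < a n\<close> \<open>0 < a s\<close>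
        red_w[unfolded 1(2)]]
    show ?thesis by auto
  next
    case 2
    show ?thesis
      using two_support_reduced_by_last_negative[OF h \<open>s < n\<close> \<open>0 < a n\<close> \<open>0 < a s\<close> red_w[unfolded 2]]
      by simp
  qed
qed

lemma circuit_reduced_by_neg_only_at:
  fixes G :: "nat \<Rightarrow> nat \<Rightarrow> int"
  assumes "2 < n" and G: "\<forall>t<n. neg_only_at n t (G t)" and h: "h n < 0" "\<forall>k<n. 0 \<le> h k"
    and div: "(binom n z :: 'k::field mpoly) \<in> ideal_gen (binom n ` G ` {..<n})"
    and z: "i < n" "j < n" "0 < z i" "z j < 0" "\<forall>k. k \<noteq> i \<longrightarrow> k \<noteq> j \<longrightarrow> z k = 0"
    and W: "\<forall>s<n. sum (G s) {..<n} < 0 \<or> sum h {..<Suc n} < 2 * h s"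
    and red: "\<exists>u\<in>insert h (G ` {..<n}). reduces_dist (Suc n) u z"
  shows "\<exists>g\<in>G ` {..<n}. reduces_dist n g z"
proof -
  have "z n = 0" using z by auto
  obtain u where "u \<in> insert h (G ` {..<n})" and u: "reduces_dist (Suc n) u z" using red by blast
  then consider t where "t < n" "u = G t" | "u = h" by blast
  then show ?thesis
  proof cases
    case 1
    then have "G t n = 0" using G by (simp add: neg_only_at_def)
    then show ?thesis using reduces_dist_Suc_zero[OF u] \<open>z n = 0\<close> 1 by blast
  next
    case 2
    then obtain p where p: "p \<in> {pospart z, negpart z}" and le: "\<forall>k<n. h k \<le> p k"
      and pos: "0 < sum h {..<Suc n}"
      using reduces_dist_last_negative[OF u[unfolded 2] \<open>z n = 0\<close> h] by blast
    \<comment> \<open>h lies below the part of z supported at t, so h vanishes at the other support index s\<close>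
    obtain t s where ts: "{t, s} = {i, j}" "t \<noteq> s" and single: "\<forall>k. k \<noteq> t \<longrightarrow> p k = 0"
      using circuit_part_single_support[OF z(3-5) p] by blast
    have "s \<in> {i, j}" using ts by blast
    then have "s < n" using z(1,2) by blast
    have "h s = 0" using le[rule_format, OF \<open>s < n\<close>] h(2) \<open>s < n\<close> single ts(2) by force
    then have "sum (G s) {..<n} < 0" using W pos \<open>s < n\<close> by fastforce
    then show ?thesis
      using neg_only_at_reduces_circuit[OF \<open>2 < n\<close> G div z(3-5) \<open>s \<in> {i, j}\<close> \<open>s < n\<close>] \<open>s < n\<close>
      by blast
  qed
qed

lemma reduces_dist_set_circuits_restrict:
  fixes G :: "nat \<Rightarrow> nat \<Rightarrow> int"
  assumes "2 < n" and a: "\<forall>k\<le>n. 0 < a k" and G: "\<forall>t<n. neg_only_at n t (G t)"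
    and h: "h n < 0" "\<forall>k<n. 0 \<le> h k"
    and markov: "markov_basis TYPE('k::field) a n (G ` {..<n})"
    and red: "reduces_dist_set (Suc n) (insert h (G ` {..<n})) (circuits a (Suc n))"
  shows "reduces_dist_set n (G ` {..<n}) (circuits a n)"
proof -
  have W: "\<forall>s<n. sum (G s) {..<n} < 0 \<or> sum h {..<Suc n} < 2 * h s"
    using binomial_circuit_reduction_alternative[OF \<open>2 < n\<close> a G h red] by blast
  show ?thesis unfolding reduces_dist_set_def
  proof (intro ballI impI)
    fix z assume z: "z \<in> circuits a n"
    have "\<forall>k<n. 0 < a k" using a by simp
    then obtain i j where ij: "i < n" "j < n" "0 < z i" "z j < 0" "\<forall>k. k \<noteq> i \<longrightarrow> k \<noteq> j \<longrightarrow> z k = 0"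
      by (rule circuit_opposite_signs[OF z])
    have "z \<in> kerC a n" using z by (simp add: circuits_def)
    then have div: "(binom n z :: 'k mpoly) \<in> ideal_gen (binom n ` G ` {..<n})"
      using markov binom_mem_toric_ideal by (simp add: markov_basis_def)
    have "\<exists>k<Suc n. z k \<noteq> 0" using ij by (intro exI[of _ i]) simp
    with circuit_Suc[OF z] have "\<exists>u\<in>insert h (G ` {..<n}). reduces_dist (Suc n) u z"
      by (rule red[unfolded reduces_dist_set_def, rule_format])
    then show "\<exists>g\<in>G ` {..<n}. reduces_dist n g z"
      by (rule circuit_reduced_by_neg_only_at[OF \<open>2 < n\<close> G h div ij W])
  qed
qed

lemma vec_snoc_zero: "vec (xs @ [0]) = vec xs"
  by (simp add: vec_def fun_eq_iff nth_append)

lemma kerC_cong: "(\<And>k. k < n \<Longrightarrow> a k = b k) \<Longrightarrow> kerC a n = kerC b n"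
  unfolding kerC_def by (metis (no_types, lifting) lessThan_iff sum.cong)

theorem proposition6p7:
  fixes a1 a2 a3 a4 c1 c2 c3 v12 v13 v21 v23 v31 v32 h1 h2 h3 h4 :: int
  assumes "a1 > 0" "a2 > 0" "a3 > 0" "a4 > 0"
    and "\<not> complete_intersection TYPE('k::field) (vec [a1, a2, a3]) 3"
    and "\<exists>x. (\<exists>l1 l2 l3 :: int. 0 \<le> l1 \<and> 0 \<le> l2 \<and> 0 \<le> l3 \<and> x = l1*a1 + l2*a2 + l3*a3)
             \<and> (\<exists>m::int. 0 \<le> m \<and> x = a4 * m)
             \<and> {x * t | t::int. True} =
               {l1*a1 + l2*a2 + l3*a3 | l1 l2 l3::int. True} \<inter> {a4 * t | t::int. True}"
    and "c1 > 0" "c2 > 0" "c3 > 0" "v12 > 0" "v13 > 0" "v21 > 0" "v23 > 0" "v31 > 0" "v32 > 0"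
    and "minimal_markov_basis TYPE('k) (vec [a1, a2, a3]) 3
           {vec [-c1, v12, v13], vec [v21, -c2, v23], vec [v31, v32, -c3]}"
    and "h1 \<ge> 0" "h2 \<ge> 0" "h3 \<ge> 0" "h4 > 0"
    and "minimal_markov_basis TYPE('k) (vec [a1, a2, a3, a4]) 4
           {vec [-c1, v12, v13, 0], vec [v21, -c2, v23, 0], vec [v31, v32, -c3, 0],
            vec [h1, h2, h3, -h4]}"
    and "reduces_dist_set 4
           {vec [-c1, v12, v13, 0], vec [v21, -c2, v23, 0], vec [v31, v32, -c3, 0],
            vec [h1, h2, h3, -h4]}
           (circuits (vec [a1, a2, a3, a4]) 4)"
  shows "reduces_dist_set 3
           {vec [-c1, v12, v13], vec [v21, -c2, v23], vec [v31, v32, -c3]}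
           (circuits (vec [a1, a2, a3]) 3)"
proof -
  \<comment> \<open>The non-complete-intersection and gluing hypotheses, and the minimality of M, are what the
    paper uses to obtain the shapes of M' and M; here those shapes are assumed, so they are unused.\<close>
  define G where "G = (!) [vec [-c1, v12, v13], vec [v21, -c2, v23], vec [v31, v32, -c3]]"
  have M': "{vec [-c1, v12, v13], vec [v21, -c2, v23], vec [v31, v32, -c3]} = G ` {..<3}"
    by (simp add: G_def numeral_3_eq_3 lessThan_Suc insert_commute)
  have "vec [x, y, w, 0] = vec [x, y, w]" for x y w :: int using vec_snoc_zero[of "[x, y, w]"] by simp
  then have M: "{vec [-c1, v12, v13, 0], vec [v21, -c2, v23, 0], vec [v31, v32, -c3, 0],
      vec [h1, h2, h3, -h4]} = insert (vec [h1, h2, h3, -h4]) (G ` {..<3})"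
    unfolding M'[symmetric] by auto
  have G: "\<forall>t<3. neg_only_at 3 t (G t)"
    using assms(7-15) by (auto simp: G_def neg_only_at_def vec_def less_Suc_eq numeral_3_eq_3)
  have ker: "kerC (vec [a1, a2, a3]) 3 = kerC (vec [a1, a2, a3, a4]) 3"
    by (rule kerC_cong) (auto simp: vec_def less_Suc_eq numeral_3_eq_3)
  have markov: "markov_basis TYPE('k) (vec [a1, a2, a3, a4]) 3 (G ` {..<3})"
    using assms(16) ker M' by (simp add: minimal_markov_basis_def markov_basis_def toric_ideal_def)
  have a: "\<forall>k\<le>3. 0 < vec [a1, a2, a3, a4] k"
    using assms(1-4) by (auto simp: vec_def le_Suc_eq numeral_3_eq_3)
  have h: "vec [h1, h2, h3, -h4] 3 < 0" "\<forall>k<3. 0 \<le> vec [h1, h2, h3, -h4] k"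
    using assms(17-20) by (auto simp: vec_def less_Suc_eq numeral_3_eq_3)
  have red: "reduces_dist_set (Suc 3) (insert (vec [h1, h2, h3, -h4]) (G ` {..<3}))
      (circuits (vec [a1, a2, a3, a4]) (Suc 3))"
    using assms(22) M by simp
  have "reduces_dist_set 3 (G ` {..<3}) (circuits (vec [a1, a2, a3, a4]) 3)"
    using reduces_dist_set_circuits_restrict[OF _ a G h markov red] by simp
  then show ?thesis using M' ker by (simp add: circuits_def)
qed

end
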